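(* For every $\varepsilon>0$, positive integer $t$, threshold $\theta\in\mathbb{R}$ and finite sequence $Q$ of counting queries, ImprovedSVT$(\cdot,Q,\theta,\lambda,t)$ (described below) satisfies $\varepsilon$-differential privacy whenever $\lambda\ge 2/\varepsilon$.
   Context: $\mathrm{Lap}(\lambda)$ is the Laplace distribution with density $\frac{1}{2\lambda}e^{-|y|/\lambda}$. A dataset is a finite multiset of tuples; two datasets are neighboring if one is obtained by inserting one tuple into the other. A counting query $q$ maps a dataset to the number of its tuples satisfying some predicate (so if $D$ is $D'$ plus one tuple then $q(D')\le q(D)\le q(D')+1$). ImprovedSVT$(D,Q=(q_1,q_2,\dots),\theta,\lambda,t)$: set $cnt=0$; draw $\hat\theta=\theta+\mathrm{Lap}(\lambda)$ once; for $i=1,2,\dots$: draw $\hat q_i(D)=q_i(D)+\mathrm{Lap}(t\lambda)$ (all noises independent); if $\hat q_i(D)>\hat\theta$, output $o_i=1$, increase $cnt$ by one, and stop if $cnt\ge t$; otherwise output $o_i=0$. The algorithm also stops when $Q$ is exhausted. The output is the sequence $(o_1,o_2,\dots)$ produced. An algorithm $\mathcal{A}$ is $\varepsilon$-differentially private if for all neighboring $D,D'$ and all outputs $O$, $\Pr[\mathcal{A}(D)=O]\le e^{\varepsilon}\Pr[\mathcal{A}(D')=O]$. *)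

theory Defs
  imports "HOL-Probability.Probability" "HOL-Library.Multiset"
begin

definition laplace :: "real \<Rightarrow> real measure" where
  "laplace b = density lborel (\<lambda>y. ennreal (exp (- \<bar>y\<bar> / b) / (2 * b)))"

definition count_query :: "('a \<Rightarrow> bool) \<Rightarrow> 'a multiset \<Rightarrow> nat" where
  "count_query P D = size (filter_mset P D)"

definition neighboring :: "'a multiset \<Rightarrow> 'a multiset \<Rightarrow> bool" where
  "neighboring D D' \<longleftrightarrow> (\<exists>x. D = add_mset x D') \<or> (\<exists>x. D' = add_mset x D)"

text \<open>Deterministic part of ImprovedSVT: r = t - cnt remaining positive answers allowed,
  th = noisy threshold, list of noisy query answers.\<close>
fun svt_run :: "nat \<Rightarrow> real \<Rightarrow> real list \<Rightarrow> bool list" where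
  "svt_run r th [] = []"
| "svt_run r th (x # xs) =
     (if x > th then True # (if r \<le> 1 then [] else svt_run (r - 1) th xs)
      else False # svt_run r th xs)"

definition svt_noise :: "real \<Rightarrow> nat \<Rightarrow> nat \<Rightarrow> (real \<times> (nat \<Rightarrow> real)) measure" where
  "svt_noise lam t n = laplace lam \<Otimes>\<^sub>M (\<Pi>\<^sub>M i\<in>{..<n}. laplace (real t * lam))"

definition improved_svt_prob ::
  "'a multiset \<Rightarrow> ('a \<Rightarrow> bool) list \<Rightarrow> real \<Rightarrow> real \<Rightarrow> nat \<Rightarrow> bool list \<Rightarrow> real" where
  "improved_svt_prob D Q \<theta> lam t out =
     measure (svt_noise lam t (length Q))
       {\<omega> \<in> space (svt_noise lam t (length Q)).
          svt_run t (\<theta> + fst \<omega>)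
            (map (\<lambda>i. real (count_query (Q ! i) D) + snd \<omega> i) [0..<length Q]) = out}"

definition differentially_private ::
  "real \<Rightarrow> ('d \<Rightarrow> 'o \<Rightarrow> real) \<Rightarrow> ('d \<Rightarrow> 'd \<Rightarrow> bool) \<Rightarrow> bool" where
  "differentially_private \<epsilon> M nb \<longleftrightarrow>
     (\<forall>D D' out. nb D D' \<longrightarrow> M D out \<le> exp \<epsilon> * M D' out)"

end

theory Submission
  imports Defs
begin

text \<open>
  Every count moves by at most one, and all
  in the same direction: down by at most one if \<open>D'\<close> lacks a record (put \<open>s = 0\<close>), up by at most
  one if \<open>D'\<close> has an extra record (put \<open>s = 1\<close>). Raising the threshold noise by \<open>s\<close> and the noise of
  every query answered positively in \<open>o\<close> by \<open>1\<close> therefore maps each noise vector that yields \<open>o\<close> on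
  \<open>D\<close> to one that yields \<open>o\<close> on \<open>D'\<close>; the comparisons after the last answer are irrelevant. As
  \<open>o\<close> contains at most \<open>t\<close> positive answers, this translation increases the Laplace densities
  by at most \<open>exp (s / \<lambda>) \<cdot> exp (t / (t \<lambda>)) \<le> exp (2 / \<lambda>) \<le> exp \<epsilon>\<close>.
\<close>

section \<open>The sparse vector run on comparison outcomes\<close>

fun svt_bits :: "nat \<Rightarrow> bool list \<Rightarrow> bool list" where
  "svt_bits r [] = []"
| "svt_bits r (b # bs) =
     (if b then True # (if r \<le> 1 then [] else svt_bits (r - 1) bs) else False # svt_bits r bs)"

lemma svt_run_eq_svt_bits: "svt_run r th xs = svt_bits r (map (\<lambda>x. th < x) xs)"
  by (induction r th xs rule: svt_run.induct) auto

lemma length_svt_bits_le: "length (svt_bits r bs) \<le> length bs"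
  by (induction r bs rule: svt_bits.induct) auto

lemma nth_svt_bits: "i < length (svt_bits r bs) \<Longrightarrow> svt_bits r bs ! i = bs ! i"
  by (induction r bs arbitrary: i rule: svt_bits.induct) (auto simp: nth_Cons split: nat.splits)

lemma svt_bits_cong:
  "length bs' = length bs \<Longrightarrow> (\<And>i. i < length (svt_bits r bs) \<Longrightarrow> bs' ! i = bs ! i)
    \<Longrightarrow> svt_bits r bs' = svt_bits r bs"
proof (induction r bs arbitrary: bs' rule: svt_bits.induct)
  case (2 r b bs)
  obtain c cs where bs': "bs' = c # cs"
    using "2.prems"(1) by (cases bs') auto
  have "c = b"
    using "2.prems"(2)[of 0] bs' by (cases b) auto
  have tail: "cs ! i = bs ! i" if "i < length (svt_bits r' bs)"
    and "Suc i < length (svt_bits r (b # bs))" for i r'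
    using "2.prems"(2)[of "Suc i"] that bs' by simp
  show ?case
  proof (cases b)
    case True
    show ?thesis
    proof (cases "r \<le> 1")
      case False
      then have "svt_bits (r - 1) cs = svt_bits (r - 1) bs"
        using "2.IH"(1)[OF True False, of cs] "2.prems"(1) tail True bs' by simp
      with True False bs' \<open>c = b\<close> show ?thesis
        by simp
    qed (use True bs' \<open>c = b\<close> in simp)
  next
    case False
    then have "svt_bits r cs = svt_bits r bs"
      using "2.IH"(2)[OF False, of cs] "2.prems"(1) tail bs' by simp
    with False bs' \<open>c = b\<close> show ?thesis
      by simp
  qed
qed simp

lemma count_svt_bits_le: "r \<ge> 1 \<Longrightarrow> count_list (svt_bits r bs) True \<le> r"
  by (induction r bs rule: svt_bits.induct) (auto simp: le_diff_conv2)

definition answer_shift :: "bool list \<Rightarrow> nat \<Rightarrow> real" where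
  "answer_shift out i = (if i < length out \<and> out ! i then 1 else 0)"

lemma answer_shift_nonneg: "0 \<le> answer_shift out i"
  by (simp add: answer_shift_def)

lemma sum_answer_shift:
  assumes "length out \<le> n"
  shows "(\<Sum>i<n. answer_shift out i) = real (count_list out True)"
proof -
  have "{i \<in> {..<n}. i < length out \<and> out ! i} = {i. i < length out \<and> out ! i}"
    using assms by auto
  then have "(\<Sum>i<n. answer_shift out i) = real (card {i. i < length out \<and> out ! i})"
    by (simp add: answer_shift_def sum.If_cases Int_def)
  also have "\<dots> = real (count_list out True)"
    by (simp add: count_list_eq_length_filter length_filter_conv_card eq_commute[of True])
  finally show ?thesis .
qed

lemma svt_run_coupling:
  fixes q q' y :: "nat \<Rightarrow> real"
  assumes "svt_run r (\<theta> + z) (map (\<lambda>i. q i + y i) [0..<n]) = out"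
    and "\<And>i. i < n \<Longrightarrow> q i + s - 1 \<le> q' i \<and> q' i \<le> q i + s"
  shows "svt_run r (\<theta> + (z + s)) (map (\<lambda>i. q' i + (y i + answer_shift out i)) [0..<n]) = out"
proof -
  let ?bs = "map (\<lambda>i. \<theta> + z < q i + y i) [0..<n]"
  let ?bs' = "map (\<lambda>i. \<theta> + (z + s) < q' i + (y i + answer_shift out i)) [0..<n]"
  have out: "svt_bits r ?bs = out"
    using assms(1) by (simp add: svt_run_eq_svt_bits comp_def)
  have "svt_bits r ?bs' = svt_bits r ?bs"
  proof (rule svt_bits_cong)
    fix i assume i: "i < length (svt_bits r ?bs)"
    then have "i < n"
      using length_svt_bits_le[of r ?bs] by simp
    moreover have "out ! i = ?bs ! i"
      using nth_svt_bits[OF i] out by simp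
    ultimately show "?bs' ! i = ?bs ! i"
      using assms(2)[OF \<open>i < n\<close>] i out by (cases "out ! i") (auto simp: answer_shift_def)
  qed simp
  with out show ?thesis
    by (simp add: svt_run_eq_svt_bits comp_def)
qed

section \<open>Maps that scale integrals by a bounded factor\<close>

definition distr_dominated :: "'a measure \<Rightarrow> ('a \<Rightarrow> 'a) \<Rightarrow> ennreal \<Rightarrow> bool" where
  "distr_dominated M g c \<longleftrightarrow> g \<in> M \<rightarrow>\<^sub>M M \<and>
     (\<forall>h\<in>borel_measurable M. (\<integral>\<^sup>+x. h (g x) \<partial>M) \<le> c * (\<integral>\<^sup>+x. h x \<partial>M))"

lemma distr_dominatedD:
  assumes "distr_dominated M g c"
  shows distr_dominated_measurable: "g \<in> M \<rightarrow>\<^sub>M M"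
    and nn_integral_comp_le: "h \<in> borel_measurable M \<Longrightarrow> (\<integral>\<^sup>+x. h (g x) \<partial>M) \<le> c * (\<integral>\<^sup>+x. h x \<partial>M)"
  using assms by (auto simp: distr_dominated_def)

lemma emeasure_vimage_le:
  assumes "distr_dominated M g c" "B \<in> sets M"
  shows "emeasure M (g -` B \<inter> space M) \<le> c * emeasure M B"
proof -
  have g: "g \<in> M \<rightarrow>\<^sub>M M"
    using assms(1) by (rule distr_dominated_measurable)
  have "emeasure M (g -` B \<inter> space M) = (\<integral>\<^sup>+x. indicator B (g x) \<partial>M)"
    using measurable_sets[OF g assms(2)] measurable_space[OF g]
    by (auto simp: nn_integral_indicator[symmetric] indicator_def intro!: nn_integral_cong)
  also have "\<dots> \<le> c * emeasure M B"
    using nn_integral_comp_le[OF assms(1) borel_measurable_indicator[OF assms(2)]] assms(2) by simp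
  finally show ?thesis .
qed

lemma distr_dominated_pair:
  assumes "distr_dominated M1 g1 c1" "distr_dominated M2 g2 c2" "sigma_finite_measure M2"
  shows "distr_dominated (M1 \<Otimes>\<^sub>M M2) (\<lambda>(x, y). (g1 x, g2 y)) (c1 * c2)"
  unfolding distr_dominated_def
proof safe
  interpret M2: sigma_finite_measure M2 by fact
  have [measurable]: "g1 \<in> M1 \<rightarrow>\<^sub>M M1" "g2 \<in> M2 \<rightarrow>\<^sub>M M2"
    using assms(1,2) by (auto dest: distr_dominated_measurable)
  show "(\<lambda>(x, y). (g1 x, g2 y)) \<in> M1 \<Otimes>\<^sub>M M2 \<rightarrow>\<^sub>M M1 \<Otimes>\<^sub>M M2"
    by measurable
  fix h :: "_ \<Rightarrow> ennreal" assume [measurable]: "h \<in> borel_measurable (M1 \<Otimes>\<^sub>M M2)"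
  define K where "K x = (\<integral>\<^sup>+y. h (x, y) \<partial>M2)" for x
  have K [measurable]: "K \<in> borel_measurable M1"
    unfolding K_def by measurable
  have "(\<integral>\<^sup>+z. h (case z of (x, y) \<Rightarrow> (g1 x, g2 y)) \<partial>(M1 \<Otimes>\<^sub>M M2))
      = (\<integral>\<^sup>+x. \<integral>\<^sup>+y. h (g1 x, g2 y) \<partial>M2 \<partial>M1)"
    by (subst M2.nn_integral_fst[symmetric]) (simp_all add: case_prod_beta')
  also have "\<dots> \<le> (\<integral>\<^sup>+x. c2 * K (g1 x) \<partial>M1)"
  proof (rule nn_integral_mono)
    fix x assume "x \<in> space M1"
    then have "(\<lambda>y. h (g1 x, y)) \<in> borel_measurable M2"
      using measurable_space[of g1 M1 M1] by measurable
    then show "(\<integral>\<^sup>+y. h (g1 x, g2 y) \<partial>M2) \<le> c2 * K (g1 x)"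
      unfolding K_def by (rule nn_integral_comp_le[OF assms(2)])
  qed
  also have "\<dots> = c2 * (\<integral>\<^sup>+x. K (g1 x) \<partial>M1)"
    by (rule nn_integral_cmult) measurable
  also have "\<dots> \<le> c2 * (c1 * (\<integral>\<^sup>+x. K x \<partial>M1))"
    by (intro mult_left_mono nn_integral_comp_le[OF assms(1) K]) simp
  also have "(\<integral>\<^sup>+x. K x \<partial>M1) = (\<integral>\<^sup>+z. h z \<partial>(M1 \<Otimes>\<^sub>M M2))"
    unfolding K_def by (rule M2.nn_integral_fst) measurable
  finally show "(\<integral>\<^sup>+z. h (case z of (x, y) \<Rightarrow> (g1 x, g2 y)) \<partial>(M1 \<Otimes>\<^sub>M M2))
      \<le> c1 * c2 * (\<integral>\<^sup>+z. h z \<partial>(M1 \<Otimes>\<^sub>M M2))"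
    by (simp add: mult_ac)
qed

lemma measurable_restrict_componentwise:
  assumes "\<And>i. i \<in> I \<Longrightarrow> g i \<in> M i \<rightarrow>\<^sub>M M i"
  shows "(\<lambda>x. restrict (\<lambda>i. g i (x i)) I) \<in> PiM I M \<rightarrow>\<^sub>M PiM I M"
proof (rule measurable_restrict)
  fix i assume "i \<in> I"
  then show "(\<lambda>x. g i (x i)) \<in> PiM I M \<rightarrow>\<^sub>M M i"
    using assms by measurable
qed

lemma distr_dominated_PiM:
  assumes "finite I" "product_sigma_finite M"
    and "\<And>i. i \<in> I \<Longrightarrow> distr_dominated (M i) (g i) (c i)"
  shows "distr_dominated (PiM I M) (\<lambda>x. restrict (\<lambda>i. g i (x i)) I) (\<Prod>i\<in>I. c i)"
  using assms(1,3)
proof (induction I rule: finite_induct)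
  case empty
  have "(\<lambda>x. restrict (\<lambda>i. g i (x i)) {}) \<in> PiM {} M \<rightarrow>\<^sub>M PiM {} M"
    by (rule measurable_restrict_componentwise) simp
  moreover have "(\<integral>\<^sup>+x. h (restrict (\<lambda>i. g i (x i)) {}) \<partial>PiM {} M) = (\<integral>\<^sup>+x. h x \<partial>PiM {} M)" for h
    by (rule nn_integral_cong) (auto simp: space_PiM restrict_def)
  ultimately show ?case
    unfolding distr_dominated_def by (simp only: prod.empty mult_1 order_refl) blast
next
  case (insert i I)
  interpret product_sigma_finite M by fact
  let ?G = "\<lambda>I x. restrict (\<lambda>j. g j (x j)) I"
  have dom_i: "distr_dominated (M i) (g i) (c i)"
    using insert.prems by simp
  have dom_I: "distr_dominated (PiM I M) (?G I) (\<Prod>j\<in>I. c j)"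
    using insert.prems by (intro insert.IH) simp
  have GI [measurable]: "?G I \<in> PiM I M \<rightarrow>\<^sub>M PiM I M"
    using dom_I by (rule distr_dominated_measurable)
  have G [measurable]: "?G (insert i I) \<in> PiM (insert i I) M \<rightarrow>\<^sub>M PiM (insert i I) M"
    using insert.prems by (intro measurable_restrict_componentwise distr_dominated_measurable)
  show ?case unfolding distr_dominated_def
  proof (intro conjI G ballI)
    fix h :: "_ \<Rightarrow> ennreal" assume h [measurable]: "h \<in> borel_measurable (PiM (insert i I) M)"
    define K where "K x = (\<integral>\<^sup>+y. h (x(i := y)) \<partial>M i)" for x
    have K [measurable]: "K \<in> borel_measurable (PiM I M)"
      unfolding K_def using insert.hyps by measurable
    have "(\<integral>\<^sup>+x. h (?G (insert i I) x) \<partial>PiM (insert i I) M)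
        = (\<integral>\<^sup>+x. \<integral>\<^sup>+y. h (?G (insert i I) (x(i := y))) \<partial>M i \<partial>PiM I M)"
      by (rule product_nn_integral_insert[OF insert.hyps]) measurable
    also have "\<dots> = (\<integral>\<^sup>+x. \<integral>\<^sup>+y. h ((?G I x)(i := g i y)) \<partial>M i \<partial>PiM I M)"
      using insert.hyps by (intro nn_integral_cong arg_cong[where f = h]) (auto simp: fun_eq_iff)
    also have "\<dots> \<le> (\<integral>\<^sup>+x. c i * K (?G I x) \<partial>PiM I M)"
    proof (rule nn_integral_mono)
      fix x assume "x \<in> space (PiM I M)"
      then have "?G I x \<in> space (PiM I M)"
        by (rule measurable_space[OF GI])
      then have "(\<lambda>y. h ((?G I x)(i := y))) \<in> borel_measurable (M i)"
        using insert.hyps by measurable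
      then show "(\<integral>\<^sup>+y. h ((?G I x)(i := g i y)) \<partial>M i) \<le> c i * K (?G I x)"
        unfolding K_def by (rule nn_integral_comp_le[OF dom_i])
    qed
    also have "\<dots> = c i * (\<integral>\<^sup>+x. K (?G I x) \<partial>PiM I M)"
      by (rule nn_integral_cmult) measurable
    also have "\<dots> \<le> c i * ((\<Prod>j\<in>I. c j) * (\<integral>\<^sup>+x. K x \<partial>PiM I M))"
      by (intro mult_left_mono nn_integral_comp_le[OF dom_I K]) simp
    also have "(\<integral>\<^sup>+x. K x \<partial>PiM I M) = (\<integral>\<^sup>+x. h x \<partial>PiM (insert i I) M)"
      unfolding K_def by (rule product_nn_integral_insert[OF insert.hyps h, symmetric])
    finally show "(\<integral>\<^sup>+x. h (?G (insert i I) x) \<partial>PiM (insert i I) M)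
        \<le> (\<Prod>j\<in>insert i I. c j) * (\<integral>\<^sup>+x. h x \<partial>PiM (insert i I) M)"
      by (simp only: prod.insert[OF insert.hyps] mult.assoc)
  qed
qed

lemma sets_Collect_map_eq:
  assumes "\<And>i. i < n \<Longrightarrow> {\<omega> \<in> space M. P i \<omega>} \<in> sets M"
  shows "{\<omega> \<in> space M. G (map (\<lambda>i. P i \<omega>) [0..<n]) = out} \<in> sets M"
proof -
  let ?S = "{bs :: bool list. length bs = n \<and> G bs = out}"
  have "finite ?S"
    using finite_lists_length_eq[of "UNIV :: bool set" n] by (rule rev_finite_subset) auto
  moreover have "G (map (\<lambda>i. P i \<omega>) [0..<n]) = out \<longleftrightarrow> (\<exists>bs\<in>?S. \<forall>i\<in>{..<n}. P i \<omega> = bs ! i)" for \<omega>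
  proof
    assume "\<exists>bs\<in>?S. \<forall>i\<in>{..<n}. P i \<omega> = bs ! i"
    then obtain bs where "length bs = n" "G bs = out" "\<forall>i\<in>{..<n}. P i \<omega> = bs ! i"
      by auto
    moreover from this have "map (\<lambda>i. P i \<omega>) [0..<n] = bs"
      by (intro nth_equalityI) auto
    ultimately show "G (map (\<lambda>i. P i \<omega>) [0..<n]) = out"
      by simp
  qed (rule bexI[of _ "map (\<lambda>i. P i \<omega>) [0..<n]"]; auto)
  moreover have "{\<omega> \<in> space M. P i \<omega> = c} \<in> sets M" if "i < n" for i c
    using assms[OF that] by (cases c) (auto simp: Collect_neg_eq Diff_eq[symmetric])
  ultimately show ?thesis
    by (simp only:) (intro sets.sets_Collect_finite_Ex sets.sets_Collect_finite_All; auto)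
qed

section \<open>The Laplace distribution\<close>

lemma sets_laplace [measurable_cong]: "sets (laplace b) = sets borel"
  by (simp add: laplace_def)

lemma space_laplace [simp]: "space (laplace b) = UNIV"
  by (simp add: laplace_def)

lemma prob_space_laplace:
  assumes "b > 0"
  shows "prob_space (laplace b)"
proof (rule prob_spaceI)
  define e where "e = exponential_density (1 / b)"
  have [measurable]: "e \<in> borel_measurable borel"
    by (simp add: e_def)
  have e_nonneg: "0 \<le> e y" for y
    using assms by (simp add: e_def exponential_density_def)
  have int_e: "(\<integral>\<^sup>+y. ennreal (e y) \<partial>lborel) = 1"
  proof -
    interpret prob_space "density lborel e"
      using assms unfolding e_def by (intro prob_space_exponential_density) simp
    show ?thesis
      using emeasure_space_1 by (simp add: emeasure_density)
  qed
  have int_e_reflected: "(\<integral>\<^sup>+y. ennreal (e (- y)) \<partial>lborel) = 1"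
    using nn_integral_real_affine[of "\<lambda>y. ennreal (e y)" "-1" 0] int_e by simp
  \<comment> \<open>Off the null set \<open>{0}\<close>, the Laplace density is the average of two reflected exponential densities.\<close>
  have "AE y in lborel. ennreal (exp (- \<bar>y\<bar> / b) / (2 * b)) = (ennreal (e y) + ennreal (e (- y))) / 2"
    using AE_lborel_singleton[of 0]
  proof eventually_elim
    case (elim y)
    then have "exp (- \<bar>y\<bar> / b) / (2 * b) = (e y + e (- y)) / 2"
      using assms by (cases "y > 0") (auto simp: e_def exponential_density_def)
    moreover have "(ennreal (e y) + ennreal (e (- y))) / 2 = ennreal ((e y + e (- y)) / 2)"
      using e_nonneg by (metis add_nonneg_nonneg divide_ennreal ennreal_numeral ennreal_plus zero_less_numeral)
    ultimately show ?case
      by (simp only:)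
  qed
  then have "emeasure (laplace b) UNIV = (\<integral>\<^sup>+y. (ennreal (e y) + ennreal (e (- y))) / 2 \<partial>lborel)"
    unfolding laplace_def by (simp add: emeasure_density cong: nn_integral_cong_AE)
  also have "\<dots> = 1"
    by (simp add: nn_integral_divide nn_integral_add int_e int_e_reflected one_add_one ennreal_divide_self)
  finally show "emeasure (laplace b) (space (laplace b)) = 1"
    by simp
qed

lemma distr_dominated_laplace_translation:
  assumes "b > 0"
  shows "distr_dominated (laplace b) (\<lambda>y. y + a) (ennreal (exp (\<bar>a\<bar> / b)))"
  unfolding distr_dominated_def
proof safe
  show "(\<lambda>y. y + a) \<in> laplace b \<rightarrow>\<^sub>M laplace b"
    by measurable
  fix h :: "real \<Rightarrow> ennreal" assume "h \<in> borel_measurable (laplace b)"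
  then have [measurable]: "h \<in> borel_measurable borel"
    by measurable
  define f where "f y = exp (- \<bar>y\<bar> / b) / (2 * b)" for y
  have f_nonneg: "0 \<le> f y" for y
    using assms by (simp add: f_def)
  have laplace_eq: "laplace b = density lborel (\<lambda>y. ennreal (f y))"
    by (simp add: laplace_def f_def)
  have f_shift: "f (u - a) \<le> exp (\<bar>a\<bar> / b) * f u" for u
  proof -
    have "- \<bar>u - a\<bar> / b \<le> \<bar>a\<bar> / b + - \<bar>u\<bar> / b"
      using assms by (simp add: field_simps)
    then have "exp (- \<bar>u - a\<bar> / b) \<le> exp (\<bar>a\<bar> / b) * exp (- \<bar>u\<bar> / b)"
      by (simp add: exp_add[symmetric])
    then show ?thesis
      using assms by (simp add: f_def divide_right_mono)
  qed
  have [measurable]: "f \<in> borel_measurable borel"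
    unfolding f_def by measurable
  have "(\<integral>\<^sup>+x. h (x + a) \<partial>laplace b) = (\<integral>\<^sup>+x. ennreal (f x) * h (x + a) \<partial>lborel)"
    unfolding laplace_eq by (subst nn_integral_density) auto
  also have "\<dots> = (\<integral>\<^sup>+u. ennreal (f (u - a)) * h u \<partial>lborel)"
    using nn_integral_real_affine[of "\<lambda>u. ennreal (f (u - a)) * h u" 1 a] by (simp add: add.commute)
  also have "\<dots> \<le> (\<integral>\<^sup>+u. ennreal (exp (\<bar>a\<bar> / b)) * (ennreal (f u) * h u) \<partial>lborel)"
    using f_shift f_nonneg
    by (intro nn_integral_mono) (simp add: mult.assoc[symmetric] ennreal_mult[symmetric] mult_right_mono ennreal_leI)
  also have "\<dots> = ennreal (exp (\<bar>a\<bar> / b)) * (\<integral>\<^sup>+x. h x \<partial>laplace b)"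
    unfolding laplace_eq by (subst nn_integral_density) (auto intro: nn_integral_cmult)
  finally show "(\<integral>\<^sup>+x. h (x + a) \<partial>laplace b) \<le> ennreal (exp (\<bar>a\<bar> / b)) * (\<integral>\<^sup>+x. h x \<partial>laplace b)" .
qed

lemma prob_space_svt_noise:
  assumes "lam > 0" "t > 0"
  shows "prob_space (svt_noise lam t n)"
  unfolding svt_noise_def using assms
  by (intro prob_space_pair prob_space_PiM prob_space_laplace) auto

lemma distr_dominated_svt_noise:
  assumes "lam > 0" "t > 0"
  shows "distr_dominated (svt_noise lam t n) (\<lambda>(z, y). (z + s, restrict (\<lambda>i. y i + a i) {..<n}))
           (ennreal (exp (\<bar>s\<bar> / lam)) * (\<Prod>i<n. ennreal (exp (\<bar>a i\<bar> / (real t * lam)))))"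
proof -
  have "t * lam > 0"
    using assms by simp
  then have "product_sigma_finite (\<lambda>_. laplace (real t * lam))"
    unfolding product_sigma_finite_def
    by (auto intro: prob_space_laplace prob_space_imp_sigma_finite)
  then have "distr_dominated (\<Pi>\<^sub>M i\<in>{..<n}. laplace (real t * lam)) (\<lambda>y. restrict (\<lambda>i. y i + a i) {..<n})
      (\<Prod>i<n. ennreal (exp (\<bar>a i\<bar> / (real t * lam))))"
    using \<open>t * lam > 0\<close> by (intro distr_dominated_PiM distr_dominated_laplace_translation) auto
  moreover have "sigma_finite_measure (\<Pi>\<^sub>M i\<in>{..<n}. laplace (real t * lam))"
    using \<open>t * lam > 0\<close> by (intro prob_space_imp_sigma_finite prob_space_PiM prob_space_laplace)
  ultimately show ?thesis
    unfolding svt_noise_def using assms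
    by (intro distr_dominated_pair distr_dominated_laplace_translation)
qed

definition svt_event :: "real \<Rightarrow> nat \<Rightarrow> nat \<Rightarrow> real \<Rightarrow> (nat \<Rightarrow> real) \<Rightarrow> bool list \<Rightarrow> (real \<times> (nat \<Rightarrow> real)) set" where
  "svt_event lam t n \<theta> q out =
     {\<omega> \<in> space (svt_noise lam t n). svt_run t (\<theta> + fst \<omega>) (map (\<lambda>i. q i + snd \<omega> i) [0..<n]) = out}"

lemma improved_svt_prob_eq_svt_event:
  "improved_svt_prob D Q \<theta> lam t out =
     measure (svt_noise lam t (length Q)) (svt_event lam t (length Q) \<theta> (\<lambda>i. real (count_query (Q ! i) D)) out)"
  by (simp add: improved_svt_prob_def svt_event_def)

lemma sets_svt_event: "svt_event lam t n \<theta> q out \<in> sets (svt_noise lam t n)"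
proof -
  have "{\<omega> \<in> space (svt_noise lam t n). \<theta> + fst \<omega> < q i + snd \<omega> i} \<in> sets (svt_noise lam t n)"
    if "i < n" for i
  proof -
    from that have [measurable]: "i \<in> {..<n}"
      by simp
    show ?thesis
      unfolding svt_noise_def by measurable
  qed
  then show ?thesis
    unfolding svt_event_def svt_run_eq_svt_bits map_map comp_def by (rule sets_Collect_map_eq)
qed

lemma measurable_svt_shift:
  "(\<lambda>(z, y). (z + s, restrict (\<lambda>i. y i + a i) {..<n})) \<in> svt_noise lam t n \<rightarrow>\<^sub>M svt_noise lam t n"
  unfolding svt_noise_def by measurable

lemma svt_event_subset_vimage:
  fixes q q' :: "nat \<Rightarrow> real" and out :: "bool list"
  assumes "\<And>i. i < n \<Longrightarrow> q i + s - 1 \<le> q' i \<and> q' i \<le> q i + s"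
  defines "\<phi> \<equiv> \<lambda>(z, y). (z + s, restrict (\<lambda>i. y i + answer_shift out i) {..<n})"
  shows "svt_event lam t n \<theta> q out \<subseteq> \<phi> -` svt_event lam t n \<theta> q' out \<inter> space (svt_noise lam t n)"
proof safe
  fix z y assume zy: "(z, y) \<in> svt_event lam t n \<theta> q out"
  then show "(z, y) \<in> space (svt_noise lam t n)"
    by (simp add: svt_event_def)
  have "svt_run t (\<theta> + z) (map (\<lambda>i. q i + y i) [0..<n]) = out"
    using zy by (simp add: svt_event_def)
  then have "svt_run t (\<theta> + (z + s)) (map (\<lambda>i. q' i + (y i + answer_shift out i)) [0..<n]) = out"
    using assms(1) by (rule svt_run_coupling)
  moreover have "map (\<lambda>i. q' i + restrict (\<lambda>i. y i + answer_shift out i) {..<n} i) [0..<n]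
      = map (\<lambda>i. q' i + (y i + answer_shift out i)) [0..<n]"
    by (intro map_cong) auto
  moreover have "\<phi> (z, y) \<in> space (svt_noise lam t n)"
    using measurable_space[OF measurable_svt_shift \<open>(z, y) \<in> space (svt_noise lam t n)\<close>]
    unfolding \<phi>_def .
  ultimately show "(z, y) \<in> \<phi> -` svt_event lam t n \<theta> q' out"
    unfolding svt_event_def \<phi>_def
    by (simp only: vimage_eq case_prod_conv mem_Collect_eq fst_conv snd_conv simp_thms)
qed

lemma svt_event_nonempty_output:
  assumes "t > 0" "svt_event lam t n \<theta> q out \<noteq> {}"
  shows "length out \<le> n" "count_list out True \<le> t"
proof -
  obtain \<omega> where \<omega>: "\<omega> \<in> svt_event lam t n \<theta> q out"
    using assms(2) by blast
  define bs where "bs = map (\<lambda>i. \<theta> + fst \<omega> < q i + snd \<omega> i) [0..<n]"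
  have "svt_bits t bs = out" "length bs = n"
    using \<omega> by (simp_all add: svt_event_def svt_run_eq_svt_bits comp_def bs_def)
  then show "length out \<le> n" "count_list out True \<le> t"
    using length_svt_bits_le[of t bs] count_svt_bits_le[of t bs] assms(1) by auto
qed

lemma svt_coupling_cost_le:
  assumes "lam > 0" "t > 0" "s \<ge> 0" "length out \<le> n" "count_list out True \<le> t"
  shows "ennreal (exp (\<bar>s\<bar> / lam)) * (\<Prod>i<n. ennreal (exp (\<bar>answer_shift out i\<bar> / (real t * lam))))
    \<le> ennreal (exp ((s + 1) / lam))"
proof -
  have "(\<Sum>i<n. answer_shift out i) / (real t * lam) \<le> 1 / lam"
    using assms by (simp add: sum_answer_shift field_simps)
  then have "s / lam + (\<Sum>i<n. answer_shift out i / (real t * lam)) \<le> (s + 1) / lam"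
    by (simp add: sum_divide_distrib[symmetric] add_divide_distrib)
  moreover have "ennreal (exp (\<bar>s\<bar> / lam)) * (\<Prod>i<n. ennreal (exp (\<bar>answer_shift out i\<bar> / (real t * lam))))
      = ennreal (exp (s / lam + (\<Sum>i<n. answer_shift out i / (real t * lam))))"
    using assms(3) answer_shift_nonneg
    by (simp add: prod_ennreal exp_sum exp_add ennreal_mult prod_nonneg)
  ultimately show ?thesis
    by (simp add: ennreal_leI)
qed

lemma measure_svt_event_le:
  fixes q q' :: "nat \<Rightarrow> real"
  assumes "lam > 0" "t > 0" "s \<ge> 0"
    and "\<And>i. i < n \<Longrightarrow> q i + s - 1 \<le> q' i \<and> q' i \<le> q i + s"
  shows "measure (svt_noise lam t n) (svt_event lam t n \<theta> q out)
    \<le> exp ((s + 1) / lam) * measure (svt_noise lam t n) (svt_event lam t n \<theta> q' out)"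
proof (cases "svt_event lam t n \<theta> q out = {}")
  case False
  let ?N = "svt_noise lam t n"
  let ?\<phi> = "\<lambda>(z, y). (z + s, restrict (\<lambda>i. y i + answer_shift out i) {..<n})"
  let ?C = "ennreal (exp (\<bar>s\<bar> / lam)) * (\<Prod>i<n. ennreal (exp (\<bar>answer_shift out i\<bar> / (real t * lam))))"
  interpret prob_space ?N
    using assms(1,2) by (rule prob_space_svt_noise)
  have dom: "distr_dominated ?N ?\<phi> ?C"
    using assms(1,2) by (rule distr_dominated_svt_noise)
  have \<phi>: "?\<phi> \<in> ?N \<rightarrow>\<^sub>M ?N"
    by (rule measurable_svt_shift)
  have coupling: "svt_event lam t n \<theta> q out \<subseteq> ?\<phi> -` svt_event lam t n \<theta> q' out \<inter> space ?N"
    using assms(4) by (rule svt_event_subset_vimage)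
  have "emeasure ?N (svt_event lam t n \<theta> q out) \<le> emeasure ?N (?\<phi> -` svt_event lam t n \<theta> q' out \<inter> space ?N)"
    using coupling measurable_sets[OF \<phi> sets_svt_event] by (rule emeasure_mono)
  also have "\<dots> \<le> ?C * emeasure ?N (svt_event lam t n \<theta> q' out)"
    using dom sets_svt_event by (rule emeasure_vimage_le)
  also have "\<dots> \<le> ennreal (exp ((s + 1) / lam)) * emeasure ?N (svt_event lam t n \<theta> q' out)"
    using assms(1-3) svt_event_nonempty_output[OF assms(2) False]
    by (intro mult_right_mono svt_coupling_cost_le) auto
  finally show ?thesis
    by (simp add: emeasure_eq_measure ennreal_mult[symmetric] ennreal_le_iff)
qed simp

lemma neighboring_count_query_shift:
  assumes "neighboring D D'"
  obtains s :: real where "s \<in> {0, 1}"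
    "\<And>P. real (count_query P D) + s - 1 \<le> real (count_query P D') \<and> real (count_query P D') \<le> real (count_query P D) + s"
  using assms unfolding neighboring_def
proof (elim disjE exE)
  fix x assume "D = add_mset x D'"
  then show thesis
    by (intro that[of 0]) (auto simp: count_query_def)
next
  fix x assume "D' = add_mset x D"
  then show thesis
    by (intro that[of 1]) (auto simp: count_query_def)
qed

theorem lemma6:
  fixes \<epsilon> \<theta> lam :: real and t :: nat and Q :: "('a \<Rightarrow> bool) list"
  assumes "\<epsilon> > 0" and "t > 0" and "lam \<ge> 2 / \<epsilon>"
  shows "differentially_private \<epsilon> (\<lambda>D. improved_svt_prob D Q \<theta> lam t) neighboring"
  unfolding differentially_private_def
proof (intro allI impI)
  fix D D' :: "'a multiset" and out
  assume "neighboring D D'"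
  then obtain s :: real where s: "s \<in> {0, 1}"
    and shift: "\<And>P. real (count_query P D) + s - 1 \<le> real (count_query P D') \<and> real (count_query P D') \<le> real (count_query P D) + s"
    by (rule neighboring_count_query_shift) blast
  have "lam > 0"
    using assms(1,3) divide_pos_pos[of 2 \<epsilon>] by linarith
  then have "(s + 1) / lam \<le> \<epsilon>"
    using s assms(1,3) by (auto simp: field_simps)
  have "improved_svt_prob D Q \<theta> lam t out
      \<le> exp ((s + 1) / lam) * improved_svt_prob D' Q \<theta> lam t out"
    unfolding improved_svt_prob_eq_svt_event
    using \<open>lam > 0\<close> assms(2) s shift by (intro measure_svt_event_le) auto
  also have "\<dots> \<le> exp \<epsilon> * improved_svt_prob D' Q \<theta> lam t out"
    using \<open>(s + 1) / lam \<le> \<epsilon>\<close> by (intro mult_right_mono) (auto simp: improved_svt_prob_def)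
  finally show "improved_svt_prob D Q \<theta> lam t out \<le> exp \<epsilon> * improved_svt_prob D' Q \<theta> lam t out" .
qed

end
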